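(* Let $A\in\mathbb R^{m\times d}$, $B\in\mathbb R^{\ell\times d}$ with $\ker B=\{0\}$, and let $v\in\mathbb S^{d-1}$ be such that $v$ is not a generalized eigenvector of $(A^TA,B^TB)$. Let $x\sim\mathcal U(\mathbb S^{d-1})$ and set $a=\|Av\|^2$, $b=\langle Av,Ax\rangle$, $c=\|Ax\|^2$, $d_v=\|Bv\|^2$, $e=\langle Bv,Bx\rangle$, $f_x=\|Bx\|^2$, $\alpha=bd_v-ae$, $\gamma=ce-bf_x$. Then almost surely $\gamma\neq0$ and $\alpha\neq0$.
   Context: A generalized eigenvector of $(A^TA,B^TB)$ is a vector $w\neq0$ with $A^TAw=\lambda B^TBw$ for some $\lambda\in\mathbb R$. $\mathcal U(\mathbb S^{d-1})$ is the uniform probability measure on the Euclidean unit sphere $\mathbb S^{d-1}\subset\mathbb R^d$. *)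

theory Defs
  imports "HOL-Analysis.Analysis"
begin

definition gen_eigvec :: "real^'n^'n \<Rightarrow> real^'n^'n \<Rightarrow> real^'n \<Rightarrow> bool" where
  "gen_eigvec M N w \<longleftrightarrow> w \<noteq> 0 \<and> (\<exists>lam::real. M *v w = lam *\<^sub>R (N *v w))"

definition unif_sphere :: "('a::euclidean_space) measure" where
  "unif_sphere = distr (uniform_measure lborel (ball 0 1)) borel (\<lambda>x. x /\<^sub>R norm x)"

end

theory Submission
  imports Defs
begin

text \<open>Both \<open>\<alpha>\<close> and \<open>\<gamma>\<close> are polynomials in x: \<open>\<alpha>\<close> is the linear form
  \<open>x \<mapsto> (d\<^sub>v A\<^sup>TA v - a B\<^sup>TB v) \<bullet> x\<close> and \<open>\<gamma>\<close> is the cubic form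
  \<open>\<parallel>Ax\<parallel>\<^sup>2 (B\<^sup>TB v \<bullet> x) - \<parallel>Bx\<parallel>\<^sup>2 (A\<^sup>TA v \<bullet> x)\<close>. Neither vanishes identically
  because \<open>A\<^sup>TA v\<close> is not a multiple of \<open>B\<^sup>TB v\<close>; for \<open>\<gamma>\<close> the witness is the component of
  \<open>A\<^sup>TA v\<close> orthogonal to \<open>B\<^sup>TB v\<close>. The zero set of a nonzero cubic is Lebesgue-null, since
  differentiating three times in a fixed direction u ends in the nonzero constant \<open>6 \<gamma>(u)\<close>
  and at each stage the zeros of a function with nonvanishing directional derivative form a
  null set. Both zero sets are cones, so their radial projections to the sphere are null for
  the uniform measure.\<close>

lemma matrix_vector_mult_has_derivative [derivative_intros]:
  fixes A :: "real^'n^'m"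
  shows "((\<lambda>x. A *v x) has_derivative (\<lambda>h. A *v h)) F"
  by (rule bounded_linear_imp_has_derivative[OF matrix_vector_mul_bounded_linear])

lemma negligible_zeros_if_directional_derivative_nonzero:
  fixes g h :: "'a::euclidean_space \<Rightarrow> real"
  assumes der: "\<And>x. \<exists>D. (g has_derivative D) (at x) \<and> D u = h x" and u: "u \<noteq> 0"
  shows "negligible {x. g x = 0 \<and> h x \<noteq> 0}"
proof -
  obtain g' where g': "\<And>x. (g has_derivative g' x) (at x)" "\<And>x. g' x u = h x"
    using der by metis
  have uu: "u \<bullet> u \<noteq> 0" using u by simp
  define S where "S = {x. g' x u \<noteq> 0}"
  \<comment> \<open>f maps the zeros of g into the hyperplane \<open>u \<bullet> y = 0\<close>, and its derivative is injective on S.\<close>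
  define f where "f = (\<lambda>x. x + (g x - (u \<bullet> x) / (u \<bullet> u)) *\<^sub>R u)"
  define f' where "f' = (\<lambda>x k. k + (g' x k - (u \<bullet> k) / (u \<bullet> u)) *\<^sub>R u)"
  have f_der: "(f has_derivative f' x) (at x)" for x
    unfolding f_def f'_def using u by (auto intro!: derivative_eq_intros g')
  have f'_inj: "inj (f' x)" if "x \<in> S" for x
  proof -
    have lin: "linear (g' x)" using g'(1) has_derivative_linear by blast
    have "k = 0" if k: "f' x k = 0" for k
    proof -
      define c where "c = g' x k - (u \<bullet> k) / (u \<bullet> u)"
      have k_eq: "k = (- c) *\<^sub>R u" using k unfolding f'_def c_def
        by (metis add.commute add_left_imp_eq diff_add_cancel scaleR_minus_left diff_0)
      then have "g' x k = - c * g' x u" "u \<bullet> k = - c * (u \<bullet> u)"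
        using lin by (simp_all add: linear_scale linear_cmul linear_neg)
      then have "c = - c * g' x u + c" using uu unfolding c_def by (simp add: field_simps)
      then have "c = 0" using \<open>x \<in> S\<close> unfolding S_def by simp
      then show "k = 0" using k_eq by simp
    qed
    moreover have "linear (f' x)" using f_der has_derivative_linear by blast
    ultimately show ?thesis by (simp add: linear_injective_0)
  qed
  have "negligible {x \<in> S. f x \<in> {y. u \<bullet> y = 0}}"
    by (rule negligible_differentiable_vimage[OF negligible_hyperplane[of u 0], where f'=f'])
       (use u f'_inj f_der has_derivative_at_withinI in blast)+
  moreover have "u \<bullet> f x = g x * (u \<bullet> u)" for x
    unfolding f_def using uu by (simp add: inner_add_right field_simps)
  ultimately show ?thesis using uu g'(2) unfolding S_def by (simp add: conj_commute)
qed

lemma negligible_zeros_if_iterated_directional_derivative_nonzero: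
  fixes g :: "nat \<Rightarrow> 'a::euclidean_space \<Rightarrow> real"
  assumes "\<And>k x. k < n \<Longrightarrow> \<exists>D. (g k has_derivative D) (at x) \<and> D u = g (Suc k) x"
    and "\<And>x. g n x \<noteq> 0" and "u \<noteq> 0"
  shows "negligible {x. g 0 x = 0}"
  using assms(1,2)
proof (induction n arbitrary: g)
  case 0
  then show ?case by simp
next
  case (Suc n)
  have "negligible {x. g 1 x = 0}"
    using Suc.IH[of "\<lambda>k. g (Suc k)"] Suc.prems by auto
  moreover have "negligible {x. g 0 x = 0 \<and> g 1 x \<noteq> 0}"
    by (rule negligible_zeros_if_directional_derivative_nonzero[OF _ \<open>u \<noteq> 0\<close>])
       (use Suc.prems(1)[of 0] in auto)
  ultimately show ?case
    by (rule negligible_subset[OF negligible_Un]) auto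
qed

lemma AE_unif_sphere_not_in_cone:
  fixes S :: "'a::euclidean_space set"
  assumes "S \<in> sets borel" and "negligible S"
    and cone: "\<And>c x. c > 0 \<Longrightarrow> c *\<^sub>R x \<in> S \<Longrightarrow> x \<in> S"
  shows "AE x in unif_sphere. x \<notin> S"
proof -
  have "S \<in> null_sets lborel"
    using assms(1,2) by (simp add: negligible_iff_null_sets null_sets_completion_iff)
  then have ae: "AE x in lborel. x \<notin> S \<and> x \<noteq> 0"
    by (rule eventually_conj[OF AE_not_in AE_lborel_singleton])
  have "AE x in uniform_measure lborel (ball 0 1). x \<notin> S \<and> x \<noteq> 0"
    by (rule AE_uniform_measureI) (auto intro: eventually_mono[OF ae])
  then have "AE x in uniform_measure lborel (ball 0 1). x /\<^sub>R norm x \<notin> S"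
  proof (rule eventually_mono)
    fix x :: 'a
    assume "x \<notin> S \<and> x \<noteq> 0"
    then show "x /\<^sub>R norm x \<notin> S" using cone[of "inverse (norm x)" x] by auto
  qed
  moreover have "(\<lambda>x. x /\<^sub>R norm x) \<in> uniform_measure lborel (ball 0 1) \<rightarrow>\<^sub>M borel"
    by (simp add: measurable_cong_sets[OF sets_uniform_measure refl]) measurable
  moreover have "{x \<in> space borel. x \<notin> S} \<in> sets borel"
    using sets.compl_sets[OF assms(1)] by (simp add: Diff_eq Collect_neg_eq)
  ultimately show ?thesis
    unfolding unif_sphere_def by (simp add: AE_distr_iff)
qed

definition cubic_form :: "real^'n^'m \<Rightarrow> real^'n^'k \<Rightarrow> real^'n \<Rightarrow> real^'n \<Rightarrow> real^'n \<Rightarrow> real" where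
  "cubic_form A B p q x = ((A *v x) \<bullet> (A *v x)) * (p \<bullet> x) - ((B *v x) \<bullet> (B *v x)) * (q \<bullet> x)"

lemma cubic_form_scaleR: "cubic_form A B p q (c *\<^sub>R x) = c ^ 3 * cubic_form A B p q x"
  unfolding cubic_form_def by (simp add: matrix_vector_mult_scaleR algebra_simps power3_eq_cube)

lemma continuous_on_cubic_form: "continuous_on S (cubic_form A B p q)"
  unfolding cubic_form_def by (intro continuous_intros)

lemma negligible_cubic_form_zeros:
  fixes A :: "real^'n^'m" and B :: "real^'n^'k"
  assumes "cubic_form A B p q u \<noteq> 0"
  shows "negligible {x. cubic_form A B p q x = 0}"
proof -
  \<comment> \<open>\<open>g k\<close> is the k-th derivative of the form in direction u; the third one is constant.\<close>
  define g :: "nat \<Rightarrow> real^'n \<Rightarrow> real" where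
    "g = (\<lambda>k x. case k of
        0 \<Rightarrow> cubic_form A B p q x
      | Suc 0 \<Rightarrow> 2 * ((A *v x) \<bullet> (A *v u)) * (p \<bullet> x) + ((A *v x) \<bullet> (A *v x)) * (p \<bullet> u)
          - 2 * ((B *v x) \<bullet> (B *v u)) * (q \<bullet> x) - ((B *v x) \<bullet> (B *v x)) * (q \<bullet> u)
      | Suc (Suc 0) \<Rightarrow> 2 * ((A *v u) \<bullet> (A *v u)) * (p \<bullet> x) + 4 * ((A *v x) \<bullet> (A *v u)) * (p \<bullet> u)
          - 2 * ((B *v u) \<bullet> (B *v u)) * (q \<bullet> x) - 4 * ((B *v x) \<bullet> (B *v u)) * (q \<bullet> u)
      | _ \<Rightarrow> 6 * cubic_form A B p q u)"
  have "\<exists>D. (g k has_derivative D) (at x) \<and> D u = g (Suc k) x" if "k < 3" for k x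
  proof -
    from that consider "k = 0" | "k = 1" | "k = 2" by linarith
    then show ?thesis
      by cases (simp_all add: g_def cubic_form_def,
          (intro exI conjI, (rule derivative_eq_intros refl)+, simp add: algebra_simps inner_commute)+)
  qed
  moreover have "u \<noteq> 0" using assms by (auto simp: cubic_form_def)
  ultimately show ?thesis
    using negligible_zeros_if_iterated_directional_derivative_nonzero[of 3 g u] assms
    by (simp add: g_def numeral_3_eq_3)
qed

lemma AE_unif_sphere_cubic_form_and_linear_form_nonzero:
  fixes A :: "real^'n^'m" and B :: "real^'n^'k"
  assumes "cubic_form A B p q u \<noteq> 0" and "z \<noteq> 0"
  shows "AE x in unif_sphere. cubic_form A B p q x \<noteq> 0 \<and> z \<bullet> x \<noteq> 0"
proof -
  define S where "S = {x. cubic_form A B p q x = 0 \<or> z \<bullet> x = 0}"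
  have "AE x in unif_sphere. x \<notin> S"
  proof (rule AE_unif_sphere_not_in_cone)
    show "S \<in> sets borel"
      unfolding S_def Collect_disj_eq
      by (intro borel_closed closed_Un closed_Collect_eq continuous_on_cubic_form continuous_intros)
    have "negligible {x. cubic_form A B p q x = 0}"
      using assms(1) by (rule negligible_cubic_form_zeros)
    moreover have "negligible {x. z \<bullet> x = 0}"
      using assms(2) by (simp add: negligible_hyperplane)
    ultimately show "negligible S"
      unfolding S_def Collect_disj_eq by (rule negligible_Un)
    show "x \<in> S" if "c > 0" "c *\<^sub>R x \<in> S" for c x
      using that by (simp add: S_def cubic_form_scaleR)
  qed
  then show ?thesis by (simp add: S_def)
qed

lemma cubic_form_orthogonal_component_nonzero:
  assumes "\<And>x. B *v x = 0 \<Longrightarrow> x = 0" and "\<And>c. q \<noteq> c *\<^sub>R p"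
  shows "cubic_form A B p q (q - (q \<bullet> p / (p \<bullet> p)) *\<^sub>R p) \<noteq> 0"
proof -
  define u where "u = q - (q \<bullet> p / (p \<bullet> p)) *\<^sub>R p"
  have "u \<noteq> 0" using assms(2) unfolding u_def by auto
  then have "B *v u \<noteq> 0" using assms(1) by auto
  \<comment> \<open>No hypothesis \<open>p \<noteq> 0\<close> is needed: for \<open>p = 0\<close> division by zero makes u equal to q.\<close>
  have "p \<bullet> u = 0"
    unfolding u_def by (cases "p = 0") (simp_all add: inner_diff_right inner_commute)
  then have "q \<bullet> u = u \<bullet> u"
    unfolding u_def by (simp add: inner_diff_left inner_commute)
  with \<open>p \<bullet> u = 0\<close> have "cubic_form A B p q u = - ((B *v u) \<bullet> (B *v u)) * (u \<bullet> u)"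
    by (simp add: cubic_form_def)
  with \<open>u \<noteq> 0\<close> \<open>B *v u \<noteq> 0\<close> show ?thesis unfolding u_def by simp
qed

lemma scaleR_diff_neq_0_if_not_collinear:
  fixes p q :: "'a::real_vector"
  assumes "a \<noteq> 0" and "\<And>c. q \<noteq> c *\<^sub>R p"
  shows "a *\<^sub>R q - b *\<^sub>R p \<noteq> 0"
proof
  assume "a *\<^sub>R q - b *\<^sub>R p = 0"
  then have eq: "a *\<^sub>R q = b *\<^sub>R p" by simp
  have "q = (1 / a) *\<^sub>R (a *\<^sub>R q)" using \<open>a \<noteq> 0\<close> by simp
  also have "\<dots> = (b / a) *\<^sub>R p" unfolding eq by simp
  finally show False using assms(2) by blast
qed

lemma gen_eigvec_gram_iff:
  fixes A :: "real^'n^'m" and B :: "real^'n^'k"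
  assumes "v \<noteq> 0"
  shows "gen_eigvec (transpose A ** A) (transpose B ** B) v
    \<longleftrightarrow> (\<exists>c. (A *v v) v* A = c *\<^sub>R ((B *v v) v* B))"
  using assms
  by (simp add: gen_eigvec_def matrix_vector_mul_assoc[symmetric] transpose_matrix_vector)

theorem mainTheorem12:
  fixes A :: "real^'d^'m" and B :: "real^'d^'l" and v :: "real^'d"
  assumes kerB: "\<forall>x. B *v x = 0 \<longrightarrow> x = 0"
    and v_sphere: "v \<in> sphere 0 1"
    and not_eig: "\<not> gen_eigvec (transpose A ** A) (transpose B ** B) v"
  shows "AE x in unif_sphere.
           (let a = (norm (A *v v))\<^sup>2; b = inner (A *v v) (A *v x); c = (norm (A *v x))\<^sup>2;
                dv = (norm (B *v v))\<^sup>2; e = inner (B *v v) (B *v x); fx = (norm (B *v x))\<^sup>2;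
                alpha = b * dv - a * e; gamma = c * e - b * fx
            in gamma \<noteq> 0 \<and> alpha \<noteq> 0)"
proof -
  define p where "p = (B *v v) v* B"
  define q where "q = (A *v v) v* A"
  define z where "z = (norm (B *v v))\<^sup>2 *\<^sub>R q - (norm (A *v v))\<^sup>2 *\<^sub>R p"
  have "v \<noteq> 0" using v_sphere by auto
  then have pencil: "q \<noteq> c *\<^sub>R p" for c
    using not_eig by (simp add: gen_eigvec_gram_iff p_def q_def)
  have "B *v v \<noteq> 0" using kerB \<open>v \<noteq> 0\<close> by auto
  then have "z \<noteq> 0"
    unfolding z_def using pencil by (intro scaleR_diff_neq_0_if_not_collinear) auto
  moreover have "cubic_form A B p q (q - (q \<bullet> p / (p \<bullet> p)) *\<^sub>R p) \<noteq> 0"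
    using kerB pencil by (intro cubic_form_orthogonal_component_nonzero) auto
  ultimately have "AE x in unif_sphere. cubic_form A B p q x \<noteq> 0 \<and> z \<bullet> x \<noteq> 0"
    by (intro AE_unif_sphere_cubic_form_and_linear_form_nonzero)
  then show ?thesis
    by (rule eventually_mono)
       (simp add: z_def p_def q_def cubic_form_def dot_lmul_matrix power2_norm_eq_inner
          inner_diff_left algebra_simps)
qed

end
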